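(* Let $\ell^\infty$ be the space of bounded real sequences with the topology of the sup norm, and let $\mathcal{C}(\ell^\infty,(\ell^\infty)^* )$ be the $\sigma$-algebra on $\ell^\infty$ generated by all continuous linear functionals on $\ell^\infty$. Then $(\ell^\infty,\text{norm topology},\mathcal{C}(\ell^\infty,(\ell^\infty)^* ))$ satisfies: (LM1) every point admits a local basis of neighborhoods consisting of measurable sets; (LM2) every continuous linear functional is measurable; (LM3) the addition $(x,y)\mapsto x+y$ is measurable from the product $\sigma$-algebra $\mathcal{C}(\ell^\infty,(\ell^\infty)^* )^{\otimes2}$ to $\mathcal{C}(\ell^\infty,(\ell^\infty)^* )$; (LM4) the $\sigma$-algebra is invariant under dilations $x\mapsto tx$, $t\ne0$. *)

theory Defs
  imports "HOL-Analysis.Analysis"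
begin

text \<open>The space l-infinity of bounded real sequences, with the sup norm, is modelled
  as the type of bounded continuous functions from nat (discrete topology) to real.\<close>
type_synonym linf = "nat \<Rightarrow>\<^sub>C real"

definition cyl_alg :: "linf measure" where
  "cyl_alg = sigma UNIV {f -` B | f B. bounded_linear (f :: linf \<Rightarrow> real) \<and> B \<in> sets borel}"

end

theory Submission
  imports Defs
begin

text \<open>Every continuous linear functional on l-infinity is measurable by construction, and
  measurability of a map into l-infinity can be tested by composing with such functionals; since
  addition and dilations commute with linear functionals, this gives (LM2)--(LM4). For (LM1),
  a closed ball of l-infinity is the countable intersection of the preimages of closed intervals
  under the coordinate evaluations, which are continuous linear functionals.\<close>

lemma space_cyl_alg [simp]: "space cyl_alg = UNIV"
  unfolding cyl_alg_def by (simp add: space_measure_of_conv)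

lemma sets_cyl_alg:
  "sets cyl_alg = sigma_sets UNIV {f -` B | f B. bounded_linear (f :: linf \<Rightarrow> real) \<and> B \<in> sets borel}"
  unfolding cyl_alg_def by (rule sets_measure_of) simp

lemma vimage_bounded_linear_in_cyl_alg:
  assumes "bounded_linear (f :: linf \<Rightarrow> real)" and "B \<in> sets borel"
  shows "f -` B \<in> sets cyl_alg"
  unfolding sets_cyl_alg using assms by (blast intro: sigma_sets.Basic)

lemma measurable_bounded_linear_cyl_alg:
  assumes "bounded_linear (f :: linf \<Rightarrow> real)"
  shows "f \<in> cyl_alg \<rightarrow>\<^sub>M borel"
  using assms by (auto intro!: borel_measurableI vimage_bounded_linear_in_cyl_alg borel_open)

lemma measurable_into_cyl_alg:
  assumes "\<And>f :: linf \<Rightarrow> real. bounded_linear f \<Longrightarrow> (\<lambda>x. f (g x)) \<in> M \<rightarrow>\<^sub>M borel"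
  shows "g \<in> M \<rightarrow>\<^sub>M cyl_alg"
  unfolding cyl_alg_def
proof (rule measurable_measure_of)
  show "g -` A \<inter> space M \<in> sets M"
    if "A \<in> {f -` B | f B. bounded_linear (f :: linf \<Rightarrow> real) \<and> B \<in> sets borel}" for A
  proof -
    from that obtain f :: "linf \<Rightarrow> real" and B
      where f: "bounded_linear f" and B: "B \<in> sets borel" and A: "A = f -` B"
      by blast
    have "(\<lambda>x. f (g x)) -` B \<inter> space M \<in> sets M"
      using measurable_sets[OF assms[OF f] B] .
    then show ?thesis by (simp add: A vimage_def)
  qed
qed auto

lemma measurable_add_cyl_alg: "(\<lambda>(x, y). x + y) \<in> cyl_alg \<Otimes>\<^sub>M cyl_alg \<rightarrow>\<^sub>M cyl_alg"
proof (rule measurable_into_cyl_alg)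
  fix f :: "linf \<Rightarrow> real" assume f: "bounded_linear f"
  have "(\<lambda>p. f (fst p) + f (snd p)) \<in> cyl_alg \<Otimes>\<^sub>M cyl_alg \<rightarrow>\<^sub>M borel"
    using measurable_bounded_linear_cyl_alg[OF f] by measurable
  moreover have "f (fst p) + f (snd p) = f (case p of (x, y) \<Rightarrow> x + y)" for p
    using linear_add[OF bounded_linear.linear[OF f]] by (simp add: case_prod_beta)
  ultimately show "(\<lambda>p. f (case p of (x, y) \<Rightarrow> x + y)) \<in> cyl_alg \<Otimes>\<^sub>M cyl_alg \<rightarrow>\<^sub>M borel"
    by simp
qed

lemma measurable_scaleR_cyl_alg: "(\<lambda>x. c *\<^sub>R x) \<in> cyl_alg \<rightarrow>\<^sub>M cyl_alg"
proof (rule measurable_into_cyl_alg)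
  fix f :: "linf \<Rightarrow> real" assume "bounded_linear f"
  then have "bounded_linear (\<lambda>x. f (c *\<^sub>R x))"
    using bounded_linear_compose bounded_linear_scaleR_right by blast
  then show "(\<lambda>x. f (c *\<^sub>R x)) \<in> cyl_alg \<rightarrow>\<^sub>M borel"
    by (rule measurable_bounded_linear_cyl_alg)
qed

lemma image_sets_eq_if_measurable_inverse:
  assumes "space M = UNIV" and "h \<in> M \<rightarrow>\<^sub>M M" and "g \<in> M \<rightarrow>\<^sub>M M"
    and "\<And>x. g (h x) = x" and "\<And>x. h (g x) = x"
  shows "(\<lambda>A. h ` A) ` sets M = sets M"
proof (intro equalityI subsetI)
  have image_eq: "h ` A = g -` A" for A
    using assms(4,5) by (auto intro: image_eqI[of _ h "g _"])
  fix A
  show "A \<in> sets M" if "A \<in> (\<lambda>A. h ` A) ` sets M"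
    using that measurable_sets[OF assms(3)] assms(1) by (auto simp: image_eq)
  show "A \<in> (\<lambda>A. h ` A) ` sets M" if "A \<in> sets M"
  proof
    show "A = h ` (h -` A)"
      using assms(5) by (auto intro: image_eqI[of _ h "g _"])
    show "h -` A \<in> sets M"
      using measurable_sets[OF assms(2) that] assms(1) by simp
  qed
qed

lemma bounded_linear_apply_bcontfun: "bounded_linear (\<lambda>f :: 'a::topological_space \<Rightarrow>\<^sub>C 'b::real_normed_vector. f x)"
proof (rule bounded_linear_intro[where K = 1])
  show "norm (apply_bcontfun f x) \<le> norm f * 1" for f :: "'a \<Rightarrow>\<^sub>C 'b"
    using norm_bounded[of f x] by simp
qed simp_all

lemma cball_bcontfun_eq_INT:
  "cball (f :: 'a::topological_space \<Rightarrow>\<^sub>C 'b::metric_space) r = (\<Inter>x. (\<lambda>g. apply_bcontfun g x) -` cball (f x) r)"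
proof (intro equalityI subsetI)
  fix g assume "g \<in> cball f r"
  then show "g \<in> (\<Inter>x. (\<lambda>g. apply_bcontfun g x) -` cball (f x) r)"
    using dist_bounded[of f _ g] by (auto simp: mem_cball intro: order_trans)
next
  fix g assume "g \<in> (\<Inter>x. (\<lambda>g. apply_bcontfun g x) -` cball (f x) r)"
  then show "g \<in> cball f r"
    by (auto simp: mem_cball intro!: dist_bound)
qed

lemma cball_in_cyl_alg: "cball (x :: linf) r \<in> sets cyl_alg"
proof -
  have "(\<lambda>g. apply_bcontfun g n) -` cball (x n) r \<in> sets cyl_alg" for n
    by (rule vimage_bounded_linear_in_cyl_alg[OF bounded_linear_apply_bcontfun]) simp
  then show ?thesis
    unfolding cball_bcontfun_eq_INT by (intro sets.countable_INT') auto
qed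

lemma local_basis_of_cballs:
  fixes x :: "'a::metric_space"
  assumes "\<And>y r. cball y r \<in> S" and "open U" and "x \<in> U"
  shows "\<exists>V \<in> S. x \<in> interior V \<and> V \<subseteq> U"
proof -
  obtain e where "e > 0" and "cball x e \<subseteq> U"
    using assms(2,3) open_contains_cball by blast
  moreover have "x \<in> interior (cball x e)"
    using \<open>e > 0\<close> mem_interior ball_subset_cball by blast
  ultimately show ?thesis
    using assms(1) by blast
qed

theorem proposition5p1:
  shows "(\<forall>x :: linf. \<forall>U. open U \<and> x \<in> U \<longrightarrow>
            (\<exists>V \<in> sets cyl_alg. x \<in> interior V \<and> V \<subseteq> U))
       \<and> (\<forall>f :: linf \<Rightarrow> real. bounded_linear f \<longrightarrow> f \<in> cyl_alg \<rightarrow>\<^sub>M borel)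
       \<and> (\<lambda>(x, y). x + y) \<in> cyl_alg \<Otimes>\<^sub>M cyl_alg \<rightarrow>\<^sub>M cyl_alg
       \<and> (\<forall>t :: real. t \<noteq> 0 \<longrightarrow> (\<lambda>A. (\<lambda>x. t *\<^sub>R x) ` A) ` sets cyl_alg = sets cyl_alg)"
proof (intro conjI allI impI)
  show "\<exists>V \<in> sets cyl_alg. x \<in> interior V \<and> V \<subseteq> U" if "open U \<and> x \<in> U" for x :: linf and U
    using that by (blast intro: local_basis_of_cballs cball_in_cyl_alg)
  show "f \<in> cyl_alg \<rightarrow>\<^sub>M borel" if "bounded_linear f" for f :: "linf \<Rightarrow> real"
    using that by (rule measurable_bounded_linear_cyl_alg)
  show "(\<lambda>(x, y). x + y) \<in> cyl_alg \<Otimes>\<^sub>M cyl_alg \<rightarrow>\<^sub>M cyl_alg"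
    by (rule measurable_add_cyl_alg)
  show "(\<lambda>A. (\<lambda>x. t *\<^sub>R x) ` A) ` sets cyl_alg = sets cyl_alg" if "t \<noteq> 0" for t :: real
    using that by (intro image_sets_eq_if_measurable_inverse[where g = "\<lambda>x. inverse t *\<^sub>R x"]
        measurable_scaleR_cyl_alg) auto
qed

end
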